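(* For every $v\in\mathbb T_F$ and $i\in[1,n]$, the pull-back $\mu_{v_0}^*(X_{i;v})\in R(X_1,\dots,X_n)$ of the coordinate $X_{i;v}$ of $\widehat{\mathscr X}$ to the initial patch is homogeneous with respect to the standard $\mathbb Z^n$-grading, and its degree is the $\mathbf c$-vector: $\deg\big(\mu_{v_0}^*(X_{i;v})\big)=\mathbf c_{i;v}$.
   Context: Fix $n\ge1$, a skew-symmetrizable integer matrix $B\in\mathbb Z^{n\times n}$ and a subset $F\subseteq[1,n]$ of frozen directions. Matrix mutation in direction $k$: $b'_{ij}=-b_{ij}$ if $i=k$ or $j=k$, else $b'_{ij}=b_{ij}+\operatorname{sgn}(b_{ik})[b_{ik}b_{kj}]_+$, with $[x]_+=\max(x,0)$ (componentwise on vectors). Let $\mathbb T$ be the $n$-regular tree with edges labeled by $[1,n]$ (distinct labels at each vertex) and initial vertex $v_0$, and $\mathbb T_F$ the subtree of vertices reachable from $v_0$ using only edges with labels in $[1,n]\setminus F$. Set $B_{v_0}=B$ and $B_{v'}=\mu_k(B_v)$ for an edge $v\overset{k}{-}v'$; write $B_v=(b^v_{ij})$. The $\mathbf c$-vectors $\mathbf c_{j;v}=(c_{1j;v},\dots,c_{nj;v})\in\mathbb Z^n$ are defined by $\mathbf c_{j;v_0}=\mathbf e_j$ and, for an edge $v\overset{k}{-}v'$, $c_{ik;v'}=-c_{ik;v}$ and $c_{ij;v'}=c_{ij;v}+[c_{ik;v}]_+b^v_{kj}+c_{ik;v}[-b^v_{kj}]_+$ for $j\ne k$ (these are the tropicalizations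 of the $Y$-pattern with initial matrix $B$). Each $\mathbf c_{j;v}$ is nonzero and sign-coherent (all entries $\ge0$ or all $\le0$). Let $R=\mathbb C[t_1,\dots,t_n]$ and $\mathbf t^{\mathbf a}=\prod t_i^{a_i}$ for $\mathbf a\in\mathbb Z_{\ge0}^n$. For $v\in\mathbb T_F$ let $U_v=\operatorname{Spec}R[X_{1;v},\dots,X_{n;v}]\cong\mathbb A^n_R$. For an edge $v\overset{k}{-}v'$ in $\mathbb T_F$ ($k\notin F$) let $\mu_k:U_v\dashrightarrow U_{v'}$ be the birational map with pull-back $\mu_k^*(X_{k;v'})=X_{k;v}^{-1}$ and, for $i\ne k$, $\mu_k^*(X_{i;v'})=X_{i;v}\big(\mathbf t^{[\operatorname{sgn}(b^v_{ki})\mathbf c_{k;v}]_+}+\mathbf t^{[-\operatorname{sgn}(b^v_{ki})\mathbf c_{k;v}]_+}X_{k;v}^{-\operatorname{sgn}(b^v_{ki})}\big)^{-b^v_{ki}}$. Composing along paths gives birational maps between any two patches, satisfying the cocycle condition; $\widehat{\mathscr X}$ is the $R$-scheme obtained by gluing the $U_v$ along the largest open subsets on which these maps are isomorphisms ($\mathcal X$-cluster variety with principal coefficients, specially completed). Write $X_i:=X_{i;v_0}$; $\mu_{v_0}^*(X_{i;v})\in R(X_1,\dots,X_n)$ is the rational function obtained by iterating these pull-backs along the path from $v$ to $v_0$. Standard grading: the $\mathbb Z^n$-grading on $R[X_1,\dots,X_n]$ with $\deg X_i=\mathbf e_i$ and $\deg t_i=-\mathbf e_i$, extended to rational functions $f/g$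 with $f,g$ nonzero homogeneous by $\deg(f/g)=\deg f-\deg g$. *)

theory Defs
  imports Complex_Main "HOL-Library.Poly_Mapping" "HOL-Library.Product_Lexorder"
          "HOL-Computational_Algebra.Fraction_Field"
begin

(* Index set [1,n] is a finite (linearly ordered) type 'n.
   Variables of R[X_1..X_n] = C[t_1..t_n][X_1..X_n]:  (False,i) = t_i,  (True,i) = X_i. *)
type_synonym 'n mono = "(bool \<times> 'n) \<Rightarrow>\<^sub>0 nat"
type_synonym 'n rpoly = "'n mono \<Rightarrow>\<^sub>0 complex"
type_synonym 'n rfun = "'n rpoly fract"

definition varP :: "bool \<times> 'n \<Rightarrow> 'n rpoly" where
  "varP v = Poly_Mapping.single (Poly_Mapping.single v 1) 1"

definition tvar :: "'n \<Rightarrow> 'n::{finite,linorder} rfun" where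
  "tvar i = Fract (varP (False, i)) 1"

definition xvar :: "'n \<Rightarrow> 'n::{finite,linorder} rfun" where
  "xvar i = Fract (varP (True, i)) 1"

definition tmon :: "('n \<Rightarrow> int) \<Rightarrow> 'n::{finite,linorder} rfun" where
  "tmon a = (\<Prod>i\<in>UNIV. tvar i ^ nat (a i))"

definition skew_symmetrizable :: "('n::finite \<Rightarrow> 'n \<Rightarrow> int) \<Rightarrow> bool" where
  "skew_symmetrizable B \<longleftrightarrow>
     (\<exists>D :: 'n \<Rightarrow> int. (\<forall>i. D i > 0) \<and> (\<forall>i j. D i * B i j = - (D j * B j i)))"

definition pos :: "int \<Rightarrow> int" where "pos x = max x 0"

definition mut_mat :: "'n \<Rightarrow> ('n \<Rightarrow> 'n \<Rightarrow> int) \<Rightarrow> ('n \<Rightarrow> 'n \<Rightarrow> int)" where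
  "mut_mat k M = (\<lambda>i j. if i = k \<or> j = k then - M i j
                         else M i j + sgn (M i k) * pos (M i k * M k j))"

(* c-matrix: C i j = c_{ij;v}, i.e. the j-th column is the c-vector c_{j;v} *)
definition mut_c :: "'n \<Rightarrow> ('n \<Rightarrow> 'n \<Rightarrow> int) \<Rightarrow> ('n \<Rightarrow> 'n \<Rightarrow> int) \<Rightarrow> ('n \<Rightarrow> 'n \<Rightarrow> int)" where
  "mut_c k M C = (\<lambda>i j. if j = k then - C i k
                         else C i j + pos (C i k) * M k j + C i k * pos (- M k j))"

(* P j = mu_{v0}^*(X_{j;v});  one step along an edge v -k- v' *)
definition mut_pb :: "'n \<Rightarrow> ('n \<Rightarrow> 'n \<Rightarrow> int) \<Rightarrow> ('n \<Rightarrow> 'n \<Rightarrow> int)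
                      \<Rightarrow> ('n \<Rightarrow> 'n::{finite,linorder} rfun) \<Rightarrow> ('n \<Rightarrow> 'n rfun)" where
  "mut_pb k M C P = (\<lambda>i. if i = k then inverse (P k)
      else (let s = sgn (M k i) in
            P i * power_int (tmon (\<lambda>l. pos (s * C l k))
                             + tmon (\<lambda>l. pos (- s * C l k)) * power_int (P k) (- s))
                            (- M k i)))"

definition seed_step :: "'n \<Rightarrow> ('n \<Rightarrow> 'n \<Rightarrow> int) \<times> ('n \<Rightarrow> 'n \<Rightarrow> int) \<times> ('n \<Rightarrow> 'n rfun)
     \<Rightarrow> ('n \<Rightarrow> 'n \<Rightarrow> int) \<times> ('n \<Rightarrow> 'n \<Rightarrow> int) \<times> ('n \<Rightarrow> 'n::{finite,linorder} rfun)" where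
  "seed_step k S = (case S of (M, C, P) \<Rightarrow> (mut_mat k M, mut_c k M C, mut_pb k M C P))"

(* a vertex v of the tree is the (reduced) word of edge labels on the path v0 -> v *)
definition seed_at :: "('n \<Rightarrow> 'n \<Rightarrow> int) \<Rightarrow> 'n list
     \<Rightarrow> ('n \<Rightarrow> 'n \<Rightarrow> int) \<times> ('n \<Rightarrow> 'n \<Rightarrow> int) \<times> ('n \<Rightarrow> 'n::{finite,linorder} rfun)" where
  "seed_at B ws = foldl (\<lambda>S k. seed_step k S) (B, (\<lambda>i j. if i = j then 1 else 0), xvar) ws"

definition Bmat :: "('n \<Rightarrow> 'n \<Rightarrow> int) \<Rightarrow> 'n list \<Rightarrow> ('n \<Rightarrow> 'n::{finite,linorder} \<Rightarrow> int)" where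
  "Bmat B ws = fst (seed_at B ws)"

definition cvec :: "('n \<Rightarrow> 'n \<Rightarrow> int) \<Rightarrow> 'n list \<Rightarrow> 'n \<Rightarrow> ('n::{finite,linorder} \<Rightarrow> int)" where
  "cvec B ws j = (\<lambda>i. fst (snd (seed_at B ws)) i j)"

definition pullback :: "('n \<Rightarrow> 'n \<Rightarrow> int) \<Rightarrow> 'n list \<Rightarrow> 'n \<Rightarrow> 'n::{finite,linorder} rfun" where
  "pullback B ws i = snd (snd (seed_at B ws)) i"

(* vertices of T_F: reduced words (no two consecutive equal labels) avoiding F *)
definition vertex_TF :: "'n set \<Rightarrow> 'n list \<Rightarrow> bool" where
  "vertex_TF F ws \<longleftrightarrow> set ws \<inter> F = {} \<and> successively (\<noteq>) ws"

definition mdeg :: "'n mono \<Rightarrow> ('n \<Rightarrow> int)" where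
  "mdeg m = (\<lambda>i. int (Poly_Mapping.lookup m (True, i)) - int (Poly_Mapping.lookup m (False, i)))"

definition homog_poly :: "'n rpoly \<Rightarrow> ('n \<Rightarrow> int) \<Rightarrow> bool" where
  "homog_poly p d \<longleftrightarrow> p \<noteq> 0 \<and> (\<forall>m\<in>Poly_Mapping.keys p. mdeg m = d)"

definition homog_rfun :: "'n::{finite,linorder} rfun \<Rightarrow> ('n \<Rightarrow> int) \<Rightarrow> bool" where
  "homog_rfun F d \<longleftrightarrow> (\<exists>f g df dg. homog_poly f df \<and> homog_poly g dg
                                   \<and> F = Fract f g \<and> d = df - dg)"

end

theory Submission
  imports Defs "HOL-Library.Complex_Order" "HOL-Library.Function_Algebras"
begin

text \<open>
  Every pull-back is built from the initial coordinates and the monomials \<open>t\<^sup>a\<close> by products,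
  inverses, integer powers and sums of two terms. Products, inverses and powers of homogeneous
  fractions are homogeneous with the expected degrees; a sum stays homogeneous provided both
  summands have the same degree and numerators and denominators have nonnegative coefficients,
  so that no cancellation can produce zero. In the mutation formula, with \<open>s = sgn b\<^sub>k\<^sub>i\<close>, the
  two summands \<open>t\<^sup>[s c\<^sub>k]\<^sub>+\<close> and \<open>t\<^sup>[-s c\<^sub>k]\<^sub>+ X\<^sub>k\<^sup>-\<^sup>s\<close> both have degree \<open>-[s c\<^sub>k]\<^sub>+\<close>
  since \<open>[x]\<^sub>+ - [-x]\<^sub>+ = x\<close>, and the resulting degree is exactly the tropical \<open>c\<close>-vector
  mutation rule.
\<close>

definition nonneg_coeffs :: "'n rpoly \<Rightarrow> bool" where
  "nonneg_coeffs p \<longleftrightarrow> (\<forall>m. 0 \<le> Poly_Mapping.lookup p m)"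

definition homog_nonneg_fract :: "'n::{finite,linorder} rfun \<Rightarrow> ('n \<Rightarrow> int) \<Rightarrow> bool" where
  "homog_nonneg_fract F d \<longleftrightarrow>
     (\<exists>f g df dg. homog_poly f df \<and> homog_poly g dg \<and> nonneg_coeffs f \<and> nonneg_coeffs g
                  \<and> F = Fract f g \<and> d = df - dg)"

lemma homog_nonneg_fract_imp_homog_rfun: "homog_nonneg_fract F d \<Longrightarrow> homog_rfun F d"
  unfolding homog_nonneg_fract_def homog_rfun_def by blast

lemma mdeg_add: "mdeg (a + b) = mdeg a + mdeg b"
  by (auto simp: mdeg_def lookup_add)

lemma nonneg_coeffs_add: "nonneg_coeffs f \<Longrightarrow> nonneg_coeffs g \<Longrightarrow> nonneg_coeffs (f + g)"
  unfolding nonneg_coeffs_def by (simp add: lookup_add)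

lemma nonneg_coeffs_mult: "nonneg_coeffs f \<Longrightarrow> nonneg_coeffs g \<Longrightarrow> nonneg_coeffs (f * g)"
  unfolding nonneg_coeffs_def lookup_mult Sum_any.expand_set
  by (auto intro!: sum_nonneg mult_nonneg_nonneg simp: when_def)

lemma homog_poly_mult:
  fixes f g :: "'n::linorder rpoly"
  assumes "homog_poly f a" "homog_poly g b"
  shows "homog_poly (f * g) (a + b)"
proof -
  have "f * g \<noteq> 0"
    using assms by (simp add: homog_poly_def)
  with assms keys_mult[of f g] show ?thesis
    unfolding homog_poly_def by (auto simp: mdeg_add)
qed

lemma homog_poly_add:
  assumes "homog_poly f d" "homog_poly g d" "nonneg_coeffs f" "nonneg_coeffs g"
  shows "homog_poly (f + g) d"
proof -
  obtain m where m: "Poly_Mapping.lookup f m \<noteq> 0"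
    using assms(1) unfolding homog_poly_def by (metis in_keys_iff keys_eq_empty equals0I)
  moreover have "0 \<le> Poly_Mapping.lookup f m" "0 \<le> Poly_Mapping.lookup g m"
    using assms(3,4) by (auto simp: nonneg_coeffs_def)
  ultimately have "Poly_Mapping.lookup (f + g) m \<noteq> 0"
    by (simp add: lookup_add add_nonneg_eq_0_iff)
  then have "f + g \<noteq> 0" by auto
  with assms(1,2) keys_add[of f g] show ?thesis
    unfolding homog_poly_def by auto
qed

lemma varP_nonzero: "varP v \<noteq> 0"
  by (metis varP_def lookup_single_eq lookup_zero one_neq_zero)

lemma homog_poly_varP: "homog_poly (varP v) (mdeg (Poly_Mapping.single v 1))"
  using varP_nonzero by (simp add: homog_poly_def varP_def del: One_nat_def)

lemma nonneg_coeffs_varP: "nonneg_coeffs (varP v)"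
  by (simp add: nonneg_coeffs_def varP_def lookup_single when_def less_eq_complex_def)

lemma homog_poly_one: "homog_poly 1 0"
  by (simp add: homog_poly_def mdeg_def zero_fun_def)

lemma nonneg_coeffs_one: "nonneg_coeffs 1"
  by (simp add: nonneg_coeffs_def lookup_one when_def less_eq_complex_def)

lemma homog_nonneg_fract_one: "homog_nonneg_fract 1 0"
  unfolding homog_nonneg_fract_def One_fract_def
  using homog_poly_one nonneg_coeffs_one by fastforce

lemma homog_nonneg_fract_mult:
  assumes "homog_nonneg_fract a da" "homog_nonneg_fract b db"
  shows "homog_nonneg_fract (a * b) (da + db)"
proof -
  obtain f g df dg where A: "homog_poly f df" "homog_poly g dg" "nonneg_coeffs f" "nonneg_coeffs g"
    "a = Fract f g" "da = df - dg"
    using assms(1) unfolding homog_nonneg_fract_def by blast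
  obtain f' g' df' dg' where B: "homog_poly f' df'" "homog_poly g' dg'"
    "nonneg_coeffs f'" "nonneg_coeffs g'" "b = Fract f' g'" "db = df' - dg'"
    using assms(2) unfolding homog_nonneg_fract_def by blast
  have "homog_poly (f * f') (df + df')" "homog_poly (g * g') (dg + dg')"
    using A B by (blast intro: homog_poly_mult)+
  moreover have "nonneg_coeffs (f * f')" "nonneg_coeffs (g * g')"
    using A B by (blast intro: nonneg_coeffs_mult)+
  moreover have "a * b = Fract (f * f') (g * g')" "da + db = (df + df') - (dg + dg')"
    using A B by simp_all
  ultimately show ?thesis unfolding homog_nonneg_fract_def by blast
qed

lemma homog_nonneg_fract_inverse:
  "homog_nonneg_fract a d \<Longrightarrow> homog_nonneg_fract (inverse a) (- d)"
  unfolding homog_nonneg_fract_def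
  by (elim exE conjE, rename_tac f g df dg, rule_tac x = g in exI, rule_tac x = f in exI) auto

lemma homog_nonneg_fract_add:
  assumes "homog_nonneg_fract a d" "homog_nonneg_fract b d"
  shows "homog_nonneg_fract (a + b) d"
proof -
  obtain f g df dg where A: "homog_poly f df" "homog_poly g dg" "nonneg_coeffs f" "nonneg_coeffs g"
    "a = Fract f g" "d = df - dg"
    using assms(1) unfolding homog_nonneg_fract_def by blast
  obtain f' g' df' dg' where B: "homog_poly f' df'" "homog_poly g' dg'"
    "nonneg_coeffs f'" "nonneg_coeffs g'" "b = Fract f' g'" "d = df' - dg'"
    using assms(2) unfolding homog_nonneg_fract_def by blast
  have "homog_poly (f * g') (df + dg')"
    using A B by (blast intro: homog_poly_mult)
  moreover have "df' + dg = df + dg'"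
    using A(6) B(6) by (simp add: fun_eq_iff) (metis diff_eq_eq add.commute diff_add_eq)
  then have "homog_poly (f' * g) (df + dg')"
    using A B homog_poly_mult[of f' df' g dg] by simp
  ultimately have "homog_poly (f * g' + f' * g) (df + dg')"
    using A B by (blast intro: homog_poly_add nonneg_coeffs_mult)
  moreover have "homog_poly (g * g') (dg + dg')"
    using A B by (blast intro: homog_poly_mult)
  moreover have "nonneg_coeffs (f * g' + f' * g)" "nonneg_coeffs (g * g')"
    using A B by (blast intro: nonneg_coeffs_mult nonneg_coeffs_add)+
  moreover have "g \<noteq> 0" "g' \<noteq> 0"
    using A B by (auto simp: homog_poly_def)
  then have "a + b = Fract (f * g' + f' * g) (g * g')"
    using A B by simp
  moreover have "d = (df + dg') - (dg + dg')"
    using A by simp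
  ultimately show ?thesis unfolding homog_nonneg_fract_def by blast
qed

lemma homog_nonneg_fract_power:
  "homog_nonneg_fract a d \<Longrightarrow> homog_nonneg_fract (a ^ n) (\<lambda>l. int n * d l)"
proof (induction n)
  case 0
  then show ?case
    using homog_nonneg_fract_one by (simp add: zero_fun_def)
next
  case (Suc n)
  have "d + (\<lambda>l. int n * d l) = (\<lambda>l. int (Suc n) * d l)"
    by (simp add: fun_eq_iff algebra_simps)
  with homog_nonneg_fract_mult[OF Suc.prems Suc.IH[OF Suc.prems]] show ?case
    by simp
qed

lemma homog_nonneg_fract_power_int:
  assumes "homog_nonneg_fract a d"
  shows "homog_nonneg_fract (power_int a k) (\<lambda>l. k * d l)"
proof (cases "0 \<le> k")
  case True
  then show ?thesis
    using homog_nonneg_fract_power[OF assms, of "nat k"] by (simp add: power_int_def)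
next
  case False
  then show ?thesis
    using homog_nonneg_fract_power[OF homog_nonneg_fract_inverse[OF assms], of "nat (- k)"]
    by (simp add: power_int_def)
qed

lemma homog_nonneg_fract_prod:
  "finite A \<Longrightarrow> (\<And>i. i \<in> A \<Longrightarrow> homog_nonneg_fract (f i) (d i)) \<Longrightarrow>
   homog_nonneg_fract (prod f A) (\<lambda>l. \<Sum>i\<in>A. d i l)"
proof (induction A rule: finite_induct)
  case empty
  then show ?case
    using homog_nonneg_fract_one by (simp add: zero_fun_def)
next
  case (insert x A)
  then show ?case
    using homog_nonneg_fract_mult[of "f x" "d x" "prod f A" "\<lambda>l. \<Sum>i\<in>A. d i l"]
    by (simp add: plus_fun_def)
qed

lemma homog_nonneg_fract_varP:
  "homog_nonneg_fract (Fract (varP v) 1) (mdeg (Poly_Mapping.single v 1))"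
  unfolding homog_nonneg_fract_def
  by (rule exI[of _ "varP v"], rule exI[of _ 1], rule exI[of _ "mdeg (Poly_Mapping.single v 1)"],
      rule exI[of _ 0])
     (simp add: homog_poly_varP nonneg_coeffs_varP homog_poly_one nonneg_coeffs_one
           del: One_nat_def)

lemma homog_nonneg_fract_xvar: "homog_nonneg_fract (xvar i) (\<lambda>l. if l = i then 1 else 0)"
proof -
  have "mdeg (Poly_Mapping.single (True, i) 1) = (\<lambda>l. if l = i then 1 else 0)"
    by (auto simp: mdeg_def lookup_single when_def)
  then show ?thesis
    using homog_nonneg_fract_varP[of "(True, i)"] unfolding xvar_def by simp
qed

lemma homog_nonneg_fract_tvar: "homog_nonneg_fract (tvar i) (\<lambda>l. if l = i then -1 else 0)"
proof -
  have "mdeg (Poly_Mapping.single (False, i) 1) = (\<lambda>l. if l = i then -1 else 0)"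
    by (auto simp: mdeg_def lookup_single when_def)
  then show ?thesis
    using homog_nonneg_fract_varP[of "(False, i)"] unfolding tvar_def by simp
qed

lemma homog_nonneg_fract_tmon:
  assumes "\<And>l. 0 \<le> a l"
  shows "homog_nonneg_fract (tmon a) (- a)"
proof -
  have "homog_nonneg_fract (tmon a) (\<lambda>l. \<Sum>i\<in>UNIV. int (nat (a i)) * (if l = i then -1 else 0))"
    unfolding tmon_def
    by (intro homog_nonneg_fract_prod homog_nonneg_fract_power homog_nonneg_fract_tvar) simp
  moreover have "(\<lambda>l. \<Sum>i\<in>UNIV. int (nat (a i)) * (if l = i then -1 else 0)) = - a"
    using assms by (auto simp: if_distrib cong: if_cong)
  ultimately show ?thesis by simp
qed

lemma pos_nonneg: "0 \<le> pos x"
  by (simp add: pos_def)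

lemma mul_pos_sgn: "b * pos (sgn b * x) = pos x * b + x * pos (- b)"
  by (cases "b > 0"; cases "b < 0") (auto simp: pos_def sgn_if max_def algebra_simps)

lemma homog_nonneg_fract_mut_pb:
  assumes H: "\<And>j. homog_nonneg_fract (P j) (\<lambda>l. C l j)"
  shows "homog_nonneg_fract (mut_pb k M C P j) (\<lambda>l. mut_c k M C l j)"
proof (cases "j = k")
  case True
  then show ?thesis
    using homog_nonneg_fract_inverse[OF H[of k]] by (simp add: mut_pb_def mut_c_def fun_Compl_def)
next
  case False
  define s where "s = sgn (M k j)"
  define e where "e = (\<lambda>l. - pos (s * C l k))"
  have summand_t: "homog_nonneg_fract (tmon (\<lambda>l. pos (s * C l k))) e"
    using homog_nonneg_fract_tmon[of "\<lambda>l. pos (s * C l k)"] by (simp add: e_def pos_nonneg fun_Compl_def)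
  have "(- (\<lambda>l. pos (- s * C l k))) + (\<lambda>l. - s * C l k) = e"
    by (auto simp: fun_eq_iff e_def pos_def max_def)
  then have summand_tX: "homog_nonneg_fract (tmon (\<lambda>l. pos (- s * C l k)) * power_int (P k) (- s)) e"
    using homog_nonneg_fract_mult[OF homog_nonneg_fract_tmon homog_nonneg_fract_power_int[OF H]]
    by (metis pos_nonneg)
  have "homog_nonneg_fract (P j * power_int (tmon (\<lambda>l. pos (s * C l k))
          + tmon (\<lambda>l. pos (- s * C l k)) * power_int (P k) (- s)) (- M k j))
          ((\<lambda>l. C l j) + (\<lambda>l. - M k j * e l))"
    by (intro homog_nonneg_fract_mult H homog_nonneg_fract_power_int
              homog_nonneg_fract_add summand_t summand_tX)
  moreover have "(\<lambda>l. C l j) + (\<lambda>l. - M k j * e l) = (\<lambda>l. mut_c k M C l j)"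
    using False mul_pos_sgn[of "M k j"] by (auto simp: mut_c_def s_def e_def algebra_simps)
  ultimately show ?thesis
    using False by (simp add: mut_pb_def s_def Let_def)
qed

lemma homog_nonneg_fract_foldl_seed_step:
  assumes "\<And>j. homog_nonneg_fract (snd (snd S) j) (\<lambda>l. fst (snd S) l j)"
  shows "homog_nonneg_fract (snd (snd (foldl (\<lambda>S k. seed_step k S) S ws)) j)
           (\<lambda>l. fst (snd (foldl (\<lambda>S k. seed_step k S) S ws)) l j)"
  using assms
proof (induction ws arbitrary: S)
  case Nil
  then show ?case by simp
next
  case (Cons k ws)
  obtain M C P where "S = (M, C, P)"
    by (cases S) auto
  with Cons.prems homog_nonneg_fract_mut_pb[of P C k M]
  have "\<And>j. homog_nonneg_fract (snd (snd (seed_step k S)) j) (\<lambda>l. fst (snd (seed_step k S)) l j)"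
    by (simp add: seed_step_def)
  from Cons.IH[OF this] show ?case by simp
qed

theorem mainTheorem5:
  fixes B :: "'n::{finite,linorder} \<Rightarrow> 'n \<Rightarrow> int" and F :: "'n set"
    and v :: "'n list" and i :: 'n
  assumes "skew_symmetrizable B"
    and "vertex_TF F v"
  shows "homog_rfun (pullback B v i) (cvec B v i)"
proof -
  have "homog_nonneg_fract (snd (snd (seed_at B v)) i) (\<lambda>l. fst (snd (seed_at B v)) l i)"
    unfolding seed_at_def
    by (rule homog_nonneg_fract_foldl_seed_step) (simp add: homog_nonneg_fract_xvar)
  then show ?thesis
    unfolding pullback_def cvec_def by (rule homog_nonneg_fract_imp_homog_rfun)
qed

end
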